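(* Let $X$ be a path-connected finite down-wide poset and let $f\colon X\to\mathbb R$ be an injective Morse function. Let $a<b$ be real numbers. If $b_0(X_a)<b_0(X_b)$, then there exists a critical value $c\in(a,b]$ of $f$ such that $b_0(X_c)=b_0(X_a)+1$; moreover, the critical point $x$ with $f(x)=c$ is a minimal element of $X$.
   Context: A finite poset is regarded as a finite $T_0$-space whose open sets are down-sets; $U_x=\{y: y\le x\}$. Write $a\prec b$ if $a<b$ and there is no $c$ with $a<c<b$. $X$ is down-wide if $\#\{y:y\prec x\}\ge2$ for every non-minimal $x$. A Morse function on $X$ is a map $f\colon X\to\mathbb R$ such that for every $x$, $\#\{y: x\prec y,\ f(x)\ge f(y)\}\le1$ and $\#\{w: w\prec x,\ f(w)\ge f(x)\}\le 1$; $x$ is critical if both sets are empty, and critical values are images of critical points. For $t\in\mathbb R$, $X_t=X^f_t=\bigcup_{f(x)\le t}U_x$ (an open subposet). $b_0(Y)$ denotes the number of connected components of $Y$. *)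

theory Defs
  imports "HOL-Analysis.Analysis"
begin

text \<open>A finite poset is modelled as a finite subset X of a type with a partial order,
carrying the induced order.  Its finite-space topology has the down-sets as open sets.\<close>

definition poset_topology :: "'a::order set \<Rightarrow> 'a topology" where
  "poset_topology X = topology (\<lambda>U. U \<subseteq> X \<and> (\<forall>x\<in>U. \<forall>y\<in>X. y \<le> x \<longrightarrow> y \<in> U))"

definition covers :: "'a::order set \<Rightarrow> 'a \<Rightarrow> 'a \<Rightarrow> bool" where
  "covers X a b \<longleftrightarrow> a \<in> X \<and> b \<in> X \<and> a < b \<and> \<not> (\<exists>c\<in>X. a < c \<and> c < b)"

definition minimal_in :: "'a::order set \<Rightarrow> 'a \<Rightarrow> bool" where
  "minimal_in X x \<longleftrightarrow> x \<in> X \<and> \<not> (\<exists>y\<in>X. y < x)"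

definition down_wide :: "'a::order set \<Rightarrow> bool" where
  "down_wide X \<longleftrightarrow> (\<forall>x\<in>X. \<not> minimal_in X x \<longrightarrow> card {y\<in>X. covers X y x} \<ge> 2)"

definition morse_function :: "'a::order set \<Rightarrow> ('a \<Rightarrow> real) \<Rightarrow> bool" where
  "morse_function X f \<longleftrightarrow> (\<forall>x\<in>X.
      card {y\<in>X. covers X x y \<and> f x \<ge> f y} \<le> 1 \<and>
      card {w\<in>X. covers X w x \<and> f w \<ge> f x} \<le> 1)"

definition critical_point :: "'a::order set \<Rightarrow> ('a \<Rightarrow> real) \<Rightarrow> 'a \<Rightarrow> bool" where
  "critical_point X f x \<longleftrightarrow> x \<in> X \<and>
      {y\<in>X. covers X x y \<and> f x \<ge> f y} = {} \<and>
      {w\<in>X. covers X w x \<and> f w \<ge> f x} = {}"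

definition critical_value :: "'a::order set \<Rightarrow> ('a \<Rightarrow> real) \<Rightarrow> real \<Rightarrow> bool" where
  "critical_value X f c \<longleftrightarrow> (\<exists>x. critical_point X f x \<and> f x = c)"

definition sublevel :: "'a::order set \<Rightarrow> ('a \<Rightarrow> real) \<Rightarrow> real \<Rightarrow> 'a set" where
  "sublevel X f t = (\<Union>x\<in>{x\<in>X. f x \<le> t}. {y\<in>X. y \<le> x})"

definition b0 :: "'a::order set \<Rightarrow> 'a set \<Rightarrow> nat" where
  "b0 X Y = card (connected_components_of (subtopology (poset_topology X) Y))"

end

theory Submission
  imports Defs
begin

text \<open>Sweep the threshold upward through the distinct values of f in (a, b]. Passing the value
  f x adds exactly the down-set U_x to the sublevel set, and U_x is connected. If U_x meets the
  previous sublevel set the number of components cannot grow; otherwise U_x is a new open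
  component and the count grows by exactly one. Hence the first time the count exceeds
  b0(X_a) it does so by one, at a value f x where U_x avoids all lower sublevel sets. Then
  every point lying above some point of U_x has value at least f x, so the Morse condition and
  down-wideness force x to be minimal, and x is critical.\<close>

lemma openin_poset_topology:
  "openin (poset_topology X) U \<longleftrightarrow> U \<subseteq> X \<and> (\<forall>x\<in>U. \<forall>y\<in>X. y \<le> x \<longrightarrow> y \<in> U)"
proof -
  have "istopology (\<lambda>U. U \<subseteq> X \<and> (\<forall>x\<in>U. \<forall>y\<in>X. y \<le> x \<longrightarrow> y \<in> U))"
    unfolding istopology_def by blast
  then show ?thesis
    unfolding poset_topology_def by (simp add: topology_inverse')
qed

lemma topspace_poset_topology: "topspace (poset_topology X) = X"
proof (rule subset_antisym)
  show "topspace (poset_topology X) \<subseteq> X"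
    using openin_topspace[of "poset_topology X"] unfolding openin_poset_topology by blast
  show "X \<subseteq> topspace (poset_topology X)"
    by (rule openin_subset) (simp add: openin_poset_topology)
qed

lemma openin_down_closure: "openin (poset_topology X) {y\<in>X. y \<le> x}"
  by (auto simp: openin_poset_topology intro: order_trans)

lemma connectedin_down_closure:
  assumes "x \<in> X"
  shows "connectedin (poset_topology X) {y\<in>X. y \<le> x}"
  unfolding connectedin topspace_poset_topology openin_poset_topology
  using assms by blast

lemma openin_sublevel: "openin (poset_topology X) (sublevel X f t)"
  unfolding openin_poset_topology sublevel_def by (auto intro: order_trans)

lemma connected_components_of_subtopology_separated_subset:
  assumes "separatedin T A B"
  shows "connected_components_of (subtopology T A) \<subseteq> connected_components_of (subtopology T (A \<union> B))"
proof
  fix D assume D: "D \<in> connected_components_of (subtopology T A)"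
  let ?Y = "subtopology T (A \<union> B)"
  obtain p where p: "p \<in> D" using nonempty_connected_components_of[OF D] by blast
  have pA: "p \<in> A" "p \<in> topspace T"
    using connected_components_of_subset[OF D] p by auto
  define C where "C = connected_component_of_set ?Y p"
  have CY: "C \<in> connected_components_of ?Y"
    unfolding C_def connected_component_in_connected_components_of using pA by simp
  have "p \<in> C" unfolding C_def using pA by (simp add: connected_component_of_refl)
  have "connectedin T C" "C \<subseteq> A \<union> B"
    using connectedin_connected_components_of[OF CY] by (auto simp: connectedin_subtopology)
  then have "C \<subseteq> A"
    using connectedin_subset_separated_union[OF _ assms] \<open>p \<in> C\<close> pA assms
    by (metis disjnt_iff separatedin_imp_disjoint subsetD)
  then have "C \<in> connected_components_of (subtopology T A)"
    using connected_components_of_subtopology[OF CY, of A]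
    by (simp add: subtopology_subtopology Int_absorb1)
  then show "D \<in> connected_components_of ?Y"
    using connected_components_of_overlap[OF D] CY \<open>p \<in> C\<close> p by blast
qed

lemma connected_components_of_subtopology_separated_Un:
  assumes "separatedin T A B"
  shows "connected_components_of (subtopology T (A \<union> B))
           = connected_components_of (subtopology T A) \<union> connected_components_of (subtopology T B)"
proof
  show "connected_components_of (subtopology T (A \<union> B))
          \<subseteq> connected_components_of (subtopology T A) \<union> connected_components_of (subtopology T B)"
  proof
    fix C assume C: "C \<in> connected_components_of (subtopology T (A \<union> B))"
    have "connectedin T C" "C \<subseteq> A \<union> B"
      using connectedin_connected_components_of[OF C] by (auto simp: connectedin_subtopology)
    then have "C \<subseteq> A \<or> C \<subseteq> B"
      using connectedin_subset_separated_union assms by blast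
    then show "C \<in> connected_components_of (subtopology T A) \<union> connected_components_of (subtopology T B)"
      using connected_components_of_subtopology[OF C, of A] connected_components_of_subtopology[OF C, of B]
      by (auto simp: subtopology_subtopology Int_absorb1)
  qed
  show "connected_components_of (subtopology T A) \<union> connected_components_of (subtopology T B)
          \<subseteq> connected_components_of (subtopology T (A \<union> B))"
    using connected_components_of_subtopology_separated_subset[OF assms]
      connected_components_of_subtopology_separated_subset[OF separatedin_sym[THEN iffD1, OF assms]]
    by (simp add: Un_commute)
qed

lemma card_connected_components_of_separated_Un_connected:
  assumes "separatedin T A B" "connectedin T B" "B \<noteq> {}"
    and "finite (connected_components_of (subtopology T A))"
  shows "card (connected_components_of (subtopology T (A \<union> B)))
           = card (connected_components_of (subtopology T A)) + 1"
proof -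
  have "topspace (subtopology T B) = B"
    using connectedin_subset_topspace[OF assms(2)] by auto
  moreover have "connected_space (subtopology T B)"
    using assms(2) by (simp add: connectedin_def)
  ultimately have "connected_components_of (subtopology T B) = {B}"
    using assms(3) by (metis connected_components_of_eq_singleton null_topspace_iff_trivial)
  moreover have "B \<notin> connected_components_of (subtopology T A)"
  proof
    assume "B \<in> connected_components_of (subtopology T A)"
    then have "B \<subseteq> A"
      using connected_components_of_subset by fastforce
    then show False
      using separatedin_imp_disjoint[OF assms(1)] assms(3) by (auto simp: disjnt_def)
  qed
  ultimately show ?thesis
    using assms(4) by (simp add: connected_components_of_subtopology_separated_Un[OF assms(1)])
qed

lemma card_connected_components_of_Un_connected_le:
  assumes "connectedin T B" "A \<inter> B \<noteq> {}"
    and "finite (connected_components_of (subtopology T A))"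
  shows "card (connected_components_of (subtopology T (A \<union> B)))
           \<le> card (connected_components_of (subtopology T A))"
proof -
  let ?Y = "subtopology T (A \<union> B)"
  define g where "g D = connected_component_of_set ?Y (SOME p. p \<in> D)" for D
  obtain q where q: "q \<in> A" "q \<in> B" using assms(2) by blast
  have "connected_components_of ?Y \<subseteq> g ` connected_components_of (subtopology T A)"
  proof
    fix C assume C: "C \<in> connected_components_of ?Y"
    then obtain x where x: "x \<in> A \<union> B" "C = connected_component_of_set ?Y x"
      by (auto simp: connected_components_of_def)
    obtain p where p: "p \<in> A" "C = connected_component_of_set ?Y p"
    proof (cases "x \<in> A")
      case False
      then have "x \<in> B" using x by blast
      moreover have "connectedin ?Y B"
        using assms(1) by (simp add: connectedin_subtopology)
      ultimately have "connected_component_of ?Y x q"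
        using q unfolding connected_component_of_def by blast
      then show thesis
        using that[of q] q x by (metis connected_component_of_equiv)
    qed (use x in blast)
    have "p \<in> topspace ?Y"
      using C p(2) nonempty_connected_components_of connected_component_of_eq_empty by metis
    then have pT: "p \<in> topspace T" by simp
    define D where "D = connected_component_of_set (subtopology T A) p"
    have D: "D \<in> connected_components_of (subtopology T A)"
      unfolding D_def connected_component_in_connected_components_of using p pT by simp
    have "p \<in> D" unfolding D_def using p pT by (simp add: connected_component_of_refl)
    then have "(SOME s. s \<in> D) \<in> D" by (rule someI)
    then have "connected_component_of ?Y p (SOME s. s \<in> D)"
      unfolding D_def by (auto elim: connected_component_of_mono)
    then have "g D = C"
      unfolding g_def p(2) by (metis connected_component_of_equiv)
    with D show "C \<in> g ` connected_components_of (subtopology T A)" by blast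
  qed
  then show ?thesis
    using assms(3) by (meson card_image_le card_mono finite_imageI le_trans)
qed

lemma sublevel_cong:
  "{x\<in>X. f x \<le> s} = {x\<in>X. f x \<le> t} \<Longrightarrow> sublevel X f s = sublevel X f t"
  unfolding sublevel_def by simp

lemma sublevel_eq_sublevel_at_max_value:
  assumes "finite X" "{y\<in>X. a < f y \<and> f y \<le> t} \<noteq> {}"
  obtains x where "x \<in> X" "a < f x" "f x \<le> t" "sublevel X f t = sublevel X f (f x)"
proof -
  let ?S = "{y\<in>X. a < f y \<and> f y \<le> t}"
  have "finite ?S" using assms(1) by simp
  then obtain x where x: "x \<in> ?S" "f x = Max (f ` ?S)"
    using Max_in[of "f ` ?S"] assms(2) by (metis (no_types, lifting) empty_is_image finite_imageI imageE)
  have "f y \<le> f x" if "y \<in> ?S" for y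
    using x(2) \<open>finite ?S\<close> that by simp
  then have "{y\<in>X. f y \<le> t} = {y\<in>X. f y \<le> f x}"
    using x(1) by force
  then show thesis
    using that x(1) sublevel_cong by blast
qed

lemma sublevel_at_value_split:
  fixes f :: "'a::order \<Rightarrow> real"
  assumes "finite X" "inj_on f X" "x \<in> X" "a < f x"
  defines "t' \<equiv> Max (insert a (f ` {y\<in>X. f y < f x}))"
  shows "a \<le> t'" "t' < f x" "\<And>z. z \<in> X \<Longrightarrow> f z < f x \<Longrightarrow> f z \<le> t'"
    and "sublevel X f (f x) = sublevel X f t' \<union> {y\<in>X. y \<le> x}"
proof -
  have fin: "finite (insert a (f ` {y\<in>X. f y < f x}))" using assms(1) by simp
  show "a \<le> t'" "\<And>z. z \<in> X \<Longrightarrow> f z < f x \<Longrightarrow> f z \<le> t'"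
    unfolding t'_def using fin by auto
  show "t' < f x"
    unfolding t'_def using fin assms(4) by (simp add: Max_less_iff)
  have "{y\<in>X. f y \<le> f x} = insert x {y\<in>X. f y \<le> t'}"
    using \<open>t' < f x\<close> \<open>\<And>z. z \<in> X \<Longrightarrow> f z < f x \<Longrightarrow> f z \<le> t'\<close> assms(2,3)
    by (auto simp: inj_on_eq_iff order_le_less)
  then show "sublevel X f (f x) = sublevel X f t' \<union> {y\<in>X. y \<le> x}"
    unfolding sublevel_def by auto
qed

lemma sublevel_split_at_top_value:
  fixes f :: "'a::order \<Rightarrow> real"
  assumes "finite X" "inj_on f X" "{y\<in>X. a < f y \<and> f y \<le> t} \<noteq> {}"
  obtains x t' where "x \<in> X" "a < f x" "f x \<le> t" "a \<le> t'" "t' < f x"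
    "card {y\<in>X. a < f y \<and> f y \<le> t'} < card {y\<in>X. a < f y \<and> f y \<le> t}"
    "\<And>z. z \<in> X \<Longrightarrow> f z < f x \<Longrightarrow> f z \<le> t'"
    "sublevel X f (f x) = sublevel X f t"
    "sublevel X f t = sublevel X f t' \<union> {y\<in>X. y \<le> x}"
proof -
  let ?S = "\<lambda>s. {y\<in>X. a < f y \<and> f y \<le> s}"
  obtain x where x: "x \<in> X" "a < f x" "f x \<le> t" and Xt: "sublevel X f t = sublevel X f (f x)"
    using sublevel_eq_sublevel_at_max_value[OF assms(1,3)] by blast
  define t' where "t' = Max (insert a (f ` {y\<in>X. f y < f x}))"
  note t' = sublevel_at_value_split[OF assms(1,2) x(1,2), folded t'_def]
  have fin_S: "finite (?S t)" using assms(1) by simp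
  have "?S t' \<subseteq> ?S t - {x}"
    using t'(2) x(3) by auto
  then have "card (?S t') \<le> card (?S t - {x})"
    using fin_S by (simp add: card_mono)
  also have "\<dots> < card (?S t)"
    using fin_S x by (intro card_Diff1_less) auto
  finally show thesis
    using that[OF x t'(1,2) _ t'(3)] Xt t'(4) by simp
qed

lemma sublevel_eq_if_no_value_between:
  assumes "a \<le> t" "{y\<in>X. a < f y \<and> f y \<le> t} = {}"
  shows "sublevel X f t = sublevel X f a"
proof (rule sublevel_cong)
  have "f y \<le> a" if "y \<in> X" "f y \<le> t" for y
    using assms(2) that by (auto simp: not_less[symmetric])
  then show "{y\<in>X. f y \<le> t} = {y\<in>X. f y \<le> a}"
    using assms(1) by auto
qed

lemma b0_Un_down_closure_le:
  assumes "finite X" "x \<in> X" "{y\<in>X. y \<le> x} \<inter> Y \<noteq> {}"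
  shows "b0 X (Y \<union> {y\<in>X. y \<le> x}) \<le> b0 X Y"
  unfolding b0_def
proof (rule card_connected_components_of_Un_connected_le)
  show "connectedin (poset_topology X) {y\<in>X. y \<le> x}"
    using assms(2) by (rule connectedin_down_closure)
  show "Y \<inter> {y\<in>X. y \<le> x} \<noteq> {}"
    using assms(3) by blast
  show "finite (connected_components_of (subtopology (poset_topology X) Y))"
    using assms(1) by (simp add: finite_connected_components_of_finite topspace_poset_topology)
qed

lemma b0_Un_down_closure_disjoint:
  assumes "finite X" "openin (poset_topology X) Y" "x \<in> X" "{y\<in>X. y \<le> x} \<inter> Y = {}"
  shows "b0 X (Y \<union> {y\<in>X. y \<le> x}) = b0 X Y + 1"
proof -
  have "separatedin (poset_topology X) Y {y\<in>X. y \<le> x}"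
    unfolding separatedin_open_sets[OF assms(2) openin_down_closure] disjnt_def
    using assms(4) by blast
  moreover have "finite (connected_components_of (subtopology (poset_topology X) Y))"
    using assms(1) by (simp add: finite_connected_components_of_finite topspace_poset_topology)
  ultimately show ?thesis
    unfolding b0_def using connectedin_down_closure[OF assms(3)] assms(3)
    by (intro card_connected_components_of_separated_Un_connected) auto
qed

lemma minimal_critical_if_down_closure_avoids_sublevel:
  assumes "finite X" "down_wide X" "morse_function X f" "inj_on f X" "x \<in> X"
    and avoid: "{y\<in>X. y \<le> x} \<inter> sublevel X f t = {}"
    and below: "\<And>z. z \<in> X \<Longrightarrow> f z < f x \<Longrightarrow> f z \<le> t"
  shows "minimal_in X x \<and> critical_point X f x"
proof -
  have above: "f x \<le> f z" if "w \<in> X" "z \<in> X" "w \<le> x" "w \<le> z" for w z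
  proof (rule ccontr)
    assume "\<not> f x \<le> f z"
    then have "f z \<le> t" using below that(2) by simp
    then have "w \<in> sublevel X f t"
      using that unfolding sublevel_def by blast
    then show False using avoid that by blast
  qed
  have lower: "{w\<in>X. covers X w x} \<subseteq> {w\<in>X. covers X w x \<and> f w \<ge> f x}"
  proof (intro subsetI CollectI conjI)
    fix w assume w: "w \<in> {w\<in>X. covers X w x}"
    then show "w \<in> X" "covers X w x" by simp_all
    then have "w \<le> x" unfolding covers_def by (simp add: less_imp_le)
    then show "f x \<le> f w" using above \<open>w \<in> X\<close> by blast
  qed
  have "card {w\<in>X. covers X w x \<and> f w \<ge> f x} \<le> 1"
    using assms(3,5) unfolding morse_function_def by blast
  moreover have "card {w\<in>X. covers X w x} \<le> card {w\<in>X. covers X w x \<and> f w \<ge> f x}"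
    using assms(1) lower by (simp add: card_mono)
  ultimately have "\<not> 2 \<le> card {w\<in>X. covers X w x}" by linarith
  then have min: "minimal_in X x"
    using assms(2,5) unfolding down_wide_def by blast
  have "\<not> (covers X x y \<and> f x \<ge> f y)" if "y \<in> X" for y
  proof
    assume "covers X x y \<and> f x \<ge> f y"
    then have "x < y" "f y \<le> f x" unfolding covers_def by auto
    moreover have "f x \<le> f y" using above[of x y] \<open>x < y\<close> assms(5) that by simp
    ultimately have "x = y" using inj_onD[OF assms(4)] assms(5) that by fastforce
    then show False using \<open>x < y\<close> by simp
  qed
  then have "{y\<in>X. covers X x y \<and> f x \<ge> f y} = {}" by blast
  moreover have "{w\<in>X. covers X w x \<and> f w \<ge> f x} = {}"
    using min unfolding minimal_in_def covers_def by blast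
  ultimately show ?thesis
    using min assms(5) unfolding critical_point_def by blast
qed

definition component_birth :: "'a::order set \<Rightarrow> ('a \<Rightarrow> real) \<Rightarrow> real \<Rightarrow> real \<Rightarrow> bool" where
  "component_birth X f a c \<longleftrightarrow> a < c \<and> critical_value X f c \<and>
     b0 X (sublevel X f c) = b0 X (sublevel X f a) + 1 \<and>
     (\<forall>x. critical_point X f x \<and> f x = c \<longrightarrow> minimal_in X x)"

lemma component_birth_at_value:
  assumes "finite X" "down_wide X" "morse_function X f" "inj_on f X" "x \<in> X" "a < f x"
    and "{y\<in>X. y \<le> x} \<inter> sublevel X f t = {}"
    and "\<And>z. z \<in> X \<Longrightarrow> f z < f x \<Longrightarrow> f z \<le> t"
    and "b0 X (sublevel X f (f x)) = b0 X (sublevel X f a) + 1"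
  shows "component_birth X f a (f x)"
proof -
  have crit: "minimal_in X x \<and> critical_point X f x"
    using minimal_critical_if_down_closure_avoids_sublevel[OF assms(1-5,7,8)] .
  have "minimal_in X y" if "critical_point X f y" "f y = f x" for y
    using that crit assms(4,5) unfolding critical_point_def by (metis inj_onD)
  then show ?thesis
    using assms(6,9) crit unfolding component_birth_def critical_value_def by auto
qed

lemma b0_sublevel_le_or_component_birth:
  fixes f :: "'a::order \<Rightarrow> real"
  assumes "finite X" "down_wide X" "morse_function X f" "inj_on f X" "a \<le> t"
  shows "b0 X (sublevel X f t) \<le> b0 X (sublevel X f a) \<or> (\<exists>c\<le>t. component_birth X f a c)"
  using assms(5)
proof (induction "card {y\<in>X. a < f y \<and> f y \<le> t}" arbitrary: t rule: less_induct)
  case less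
  show ?case
  proof (cases "{y\<in>X. a < f y \<and> f y \<le> t} = {}")
    case True
    then have "sublevel X f t = sublevel X f a"
      using less.prems by (rule sublevel_eq_if_no_value_between[rotated])
    then show ?thesis by simp
  next
    case False
    then obtain x t' where x: "x \<in> X" "a < f x" "f x \<le> t" and t': "a \<le> t'" "t' < f x"
      and card_less: "card {y\<in>X. a < f y \<and> f y \<le> t'} < card {y\<in>X. a < f y \<and> f y \<le> t}"
      and below: "\<And>z. z \<in> X \<Longrightarrow> f z < f x \<Longrightarrow> f z \<le> t'"
      and Xfx: "sublevel X f (f x) = sublevel X f t"
      and Xt: "sublevel X f t = sublevel X f t' \<union> {y\<in>X. y \<le> x}"
      using sublevel_split_at_top_value[OF assms(1,4)] by blast
    have IH: "b0 X (sublevel X f t') \<le> b0 X (sublevel X f a) \<or> (\<exists>c\<le>t'. component_birth X f a c)"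
      using less.hyps[OF card_less t'(1)] .
    consider (birth) "\<exists>c\<le>t'. component_birth X f a c"
      | (attach) "b0 X (sublevel X f t') \<le> b0 X (sublevel X f a)"
          "{y\<in>X. y \<le> x} \<inter> sublevel X f t' \<noteq> {}"
      | (new) "b0 X (sublevel X f t') \<le> b0 X (sublevel X f a)"
          "{y\<in>X. y \<le> x} \<inter> sublevel X f t' = {}"
      using IH by blast
    then show ?thesis
    proof cases
      case birth
      then obtain c where "c \<le> t'" "component_birth X f a c" by blast
      then show ?thesis using t'(2) x(3) by (intro disjI2 exI[of _ c]) auto
    next
      case attach
      then show ?thesis
        using b0_Un_down_closure_le[OF assms(1) x(1) attach(2)] Xt by simp
    next
      case new
      have b0_up: "b0 X (sublevel X f t) = b0 X (sublevel X f t') + 1"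
        unfolding Xt using b0_Un_down_closure_disjoint[OF assms(1) openin_sublevel x(1) new(2)] .
      show ?thesis
      proof (cases "b0 X (sublevel X f t') < b0 X (sublevel X f a)")
        case True
        then show ?thesis using b0_up by simp
      next
        case False
        then have "component_birth X f a (f x)"
          using component_birth_at_value[OF assms(1-4) x(1,2) new(2) below] b0_up new(1) Xfx
          by simp
        then show ?thesis using x(3) by blast
      qed
    qed
  qed
qed

theorem mainTheorem8:
  fixes X :: "'a::order set" and f :: "'a \<Rightarrow> real" and a b :: real
  assumes "finite X"
    and "path_connected_space (poset_topology X)"
    and "down_wide X"
    and "morse_function X f"
    and "inj_on f X"
    and "a < b"
    and "b0 X (sublevel X f a) < b0 X (sublevel X f b)"
  shows "\<exists>c. a < c \<and> c \<le> b \<and> critical_value X f c \<and>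
           b0 X (sublevel X f c) = b0 X (sublevel X f a) + 1 \<and>
           (\<forall>x. critical_point X f x \<and> f x = c \<longrightarrow> minimal_in X x)"
proof -
  have "\<not> b0 X (sublevel X f b) \<le> b0 X (sublevel X f a)" using assms(7) by simp
  then obtain c where "c \<le> b" "component_birth X f a c"
    using b0_sublevel_le_or_component_birth[OF assms(1,3-5), of a b] assms(6) by auto
  then show ?thesis
    unfolding component_birth_def by blast
qed

end
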